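(* Let $(\mathcal{R},\mu)$ be resonant, let $\|\cdot\|_X$ be an r.i. quasi-Banach function norm on $\mathcal{M}(\mathcal{R},\mu)$, and let $\|\cdot\|_{\overline{X}}$ be the r.i. quasi-Banach function norm on $\mathcal{M}([0,\infty),\lambda)$ constructed as in the context. Then the Hardy–Littlewood–Pólya principle holds for $\|\cdot\|_X$ if and only if it holds for $\|\cdot\|_{\overline{X}}$.
   Context: Let $(\mathcal{R},\mu)$ be a $\sigma$-finite measure space; $\mathcal{M}$ denotes the $\mu$-measurable extended complex-valued functions (identified a.e.), $\mathcal{M}_+$ the non-negative ones. $f_*(s)=\mu(\{|f|>s\})$, $f^*(t)=\inf\{s\ge0;\,f_*(s)\le t\}$ (non-increasing rearrangement). $(\mathcal{R},\mu)$ is called resonant if it is either non-atomic or completely atomic with all atoms of equal measure. A quasi-Banach function norm is a map $\|\cdot\|:\mathcal{M}\to[0,\infty]$ with $\|f\|=\||f|\|$ such that on $\mathcal{M}_+$: (Q1) $\|af\|=|a|\|f\|$, $\|f\|=0\iff f=0$ a.e., and there is $C\ge1$ (modulus of concavity) with $\|f+g\|\le C(\|f\|+\|g\|)$; (P2) $f\le g$ a.e. implies $\|f\|\le\|g\|$; (P3) $f_n\uparrow f$ a.e. implies $\|f_n\|\uparrow\|f\|$; (P4) $\|\chi_E\|<\infty$ whenever $\mu(E)<\infty$. The norm is rearrangement-invariant (r.i.) if $\|f\|=\|g\|$ whenever $f^*=g^*$. Hardy–Littlewood–Pólya relation: $f\prec g$ means $\int_0^t f^*\,d\lambda\le\int_0^t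 g^*\,d\lambda$ for all $t\in(0,\infty)$. The Hardy–Littlewood–Pólya principle holds for an r.i. quasi-Banach function norm $\|\cdot\|$ if $\|f\|\le\|g\|$ whenever $f\prec g$. Construction of $\|\cdot\|_{\overline{X}}$: (i) If $(\mathcal{R},\mu)$ is non-atomic, fix a measure-preserving map $\sigma$ from $(\mathcal{R},\mu)$ onto $[0,\mu(\mathcal{R}))$ (with Lebesgue measure $\lambda$), and for $h\in\mathcal{M}([0,\mu(\mathcal{R})),\lambda)$ put $\|h\|_{\overline{X_0}}=\|h\circ\sigma\|_X$. (ii) If $(\mathcal{R},\mu)$ is completely atomic with all atoms of measure $\beta\in(0,\infty)$, fix an enumeration $(e_n)_{n\in\mathcal{N}}$ of the atoms, $\mathcal{N}=\{n\in\mathbb{N};\,\beta n<\mu(\mathcal{R})\}$ ($0\in\mathbb{N}$), define $T(h)(e_n)=\beta^{-1}\int_{\beta n}^{\beta(n+1)}h^*\,d\lambda$ for $n\in\mathcal{N}$, and put $\|h\|_{\overline{X_0}}=\|T(h)\|_X$. In both cases define, for $f\in\mathcal{M}([0,\infty),\lambda)$, $\|f\|_{\overline{X}}=\|f^*\chi_{[0,\mu(\mathcal{R}))}\|_{\overline{X_0}}$. (This is an r.i. quasi-Banach function norm with $\|f\|_X=\|f^*\|_{\overline{X}}$ for $f\in\mathcal{M}(\mathcal{R},\mu)$.) *)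

theory Defs
  imports "HOL-Analysis.Analysis"
begin

text \<open>Functions are represented through their moduli: a (quasi-)norm is a functional on
  non-negative extended-real valued functions (type ennreal); only its values on measurable
  functions matter.\<close>

definition atom :: "'a measure \<Rightarrow> 'a set \<Rightarrow> bool" where
  "atom M A \<longleftrightarrow> A \<in> sets M \<and> 0 < emeasure M A \<and>
     (\<forall>B\<in>sets M. B \<subseteq> A \<longrightarrow> emeasure M B = 0 \<or> emeasure M (A - B) = 0)"

definition non_atomic :: "'a measure \<Rightarrow> bool" where
  "non_atomic M \<longleftrightarrow> (\<forall>A. \<not> atom M A)"

definition completely_atomic :: "'a measure \<Rightarrow> bool" where
  "completely_atomic M \<longleftrightarrow>
     (\<forall>A\<in>sets M. 0 < emeasure M A \<longrightarrow> (\<exists>B. B \<subseteq> A \<and> atom M B))"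

definition resonant :: "'a measure \<Rightarrow> bool" where
  "resonant M \<longleftrightarrow> non_atomic M \<or>
     (completely_atomic M \<and> (\<exists>\<beta>. \<forall>A. atom M A \<longrightarrow> emeasure M A = \<beta>))"

definition rearr :: "'a measure \<Rightarrow> ('a \<Rightarrow> ennreal) \<Rightarrow> real \<Rightarrow> ennreal" where
  "rearr M f t = Inf {s. emeasure M {x \<in> space M. s < f x} \<le> ennreal t}"

definition qbfn :: "'a measure \<Rightarrow> (('a \<Rightarrow> ennreal) \<Rightarrow> ennreal) \<Rightarrow> bool" where
  "qbfn M X \<longleftrightarrow>
     (\<forall>f\<in>borel_measurable M. \<forall>a::real. a \<ge> 0 \<longrightarrow>
         X (\<lambda>x. ennreal a * f x) = ennreal a * X f) \<and>
     (\<forall>f\<in>borel_measurable M. X f = 0 \<longleftrightarrow> (AE x in M. f x = 0)) \<and>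
     (\<exists>C::real. C \<ge> 1 \<and> (\<forall>f\<in>borel_measurable M. \<forall>g\<in>borel_measurable M.
         X (\<lambda>x. f x + g x) \<le> ennreal C * (X f + X g))) \<and>
     (\<forall>f\<in>borel_measurable M. \<forall>g\<in>borel_measurable M.
         (AE x in M. f x \<le> g x) \<longrightarrow> X f \<le> X g) \<and>
     (\<forall>F f. (\<forall>n. F n \<in> borel_measurable M) \<longrightarrow> f \<in> borel_measurable M \<longrightarrow>
         (AE x in M. incseq (\<lambda>n. F n x) \<and> (\<lambda>n. F n x) \<longlonglongrightarrow> f x) \<longrightarrow>
         (\<lambda>n. X (F n)) \<longlonglongrightarrow> X f) \<and>
     (\<forall>E\<in>sets M. emeasure M E < \<infinity> \<longrightarrow> X (indicator E) < \<infinity>)"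

definition rearrangement_invariant :: "'a measure \<Rightarrow> (('a \<Rightarrow> ennreal) \<Rightarrow> ennreal) \<Rightarrow> bool" where
  "rearrangement_invariant M X \<longleftrightarrow>
     (\<forall>f\<in>borel_measurable M. \<forall>g\<in>borel_measurable M.
        (\<forall>t\<ge>0. rearr M f t = rearr M g t) \<longrightarrow> X f = X g)"

definition ri_qbfn :: "'a measure \<Rightarrow> (('a \<Rightarrow> ennreal) \<Rightarrow> ennreal) \<Rightarrow> bool" where
  "ri_qbfn M X \<longleftrightarrow> qbfn M X \<and> rearrangement_invariant M X"

definition hlp_rel :: "'a measure \<Rightarrow> ('a \<Rightarrow> ennreal) \<Rightarrow> ('a \<Rightarrow> ennreal) \<Rightarrow> bool" where
  "hlp_rel M f g \<longleftrightarrow> (\<forall>t>0.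
     (\<integral>\<^sup>+ s\<in>{0..t}. rearr M f s \<partial>lborel) \<le> (\<integral>\<^sup>+ s\<in>{0..t}. rearr M g s \<partial>lborel))"

definition HLP_principle :: "'a measure \<Rightarrow> (('a \<Rightarrow> ennreal) \<Rightarrow> ennreal) \<Rightarrow> bool" where
  "HLP_principle M X \<longleftrightarrow>
     (\<forall>f\<in>borel_measurable M. \<forall>g\<in>borel_measurable M. hlp_rel M f g \<longrightarrow> X f \<le> X g)"

definition Ival :: "'a measure \<Rightarrow> real set" where
  "Ival M = {t. 0 \<le> t \<and> ennreal t < emeasure M (space M)}"

definition Nset :: "'a measure \<Rightarrow> real \<Rightarrow> nat set" where
  "Nset M \<beta> = {n. ennreal (\<beta> * real n) < emeasure M (space M)}"

definition atom_enum :: "'a measure \<Rightarrow> real \<Rightarrow> (nat \<Rightarrow> 'a set) \<Rightarrow> bool" where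
  "atom_enum M \<beta> e \<longleftrightarrow> (\<forall>n\<in>Nset M \<beta>. atom M (e n)) \<and> disjoint_family_on e (Nset M \<beta>) \<and>
     emeasure M (space M - (\<Union>n\<in>Nset M \<beta>. e n)) = 0"

definition Tatom :: "'a measure \<Rightarrow> real \<Rightarrow> (nat \<Rightarrow> 'a set) \<Rightarrow> (real \<Rightarrow> ennreal) \<Rightarrow> 'a \<Rightarrow> ennreal" where
  "Tatom M \<beta> e h x = (\<Sum>n. (if n \<in> Nset M \<beta> then indicator (e n) x *
      (ennreal (1 / \<beta>) * (\<integral>\<^sup>+ t\<in>{\<beta> * real n..\<beta> * real (n + 1)}.
          rearr (lebesgue_on (Ival M)) h t \<partial>lborel)) else 0))"

text \<open>Xb is the functional on M([0,\<infinity>),\<lambda>) obtained from X by the construction, for some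
  admissible choice of the measure-preserving map sigma (non-atomic case) or of the
  enumeration of atoms (completely atomic case).\<close>
definition is_Xbar :: "'a measure \<Rightarrow> (('a \<Rightarrow> ennreal) \<Rightarrow> ennreal) \<Rightarrow> ((real \<Rightarrow> ennreal) \<Rightarrow> ennreal) \<Rightarrow> bool" where
  "is_Xbar M X Xb \<longleftrightarrow>
     (non_atomic M \<and>
       (\<exists>\<sigma>. \<sigma> \<in> measurable M (restrict_space lborel (Ival M)) \<and>
            distr M (restrict_space lborel (Ival M)) \<sigma> = restrict_space lborel (Ival M) \<and>
            Xb = (\<lambda>f. X ((\<lambda>t. rearr (lebesgue_on {0..}) f t * indicator (Ival M) t) \<circ> \<sigma>))))
   \<or> (completely_atomic M \<and>
       (\<exists>\<beta>::real. 0 < \<beta> \<and> (\<forall>A. atom M A \<longrightarrow> emeasure M A = ennreal \<beta>) \<and>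
          (\<exists>e. atom_enum M \<beta> e \<and>
            Xb = (\<lambda>f. X (Tatom M \<beta> e (\<lambda>t. rearr (lebesgue_on {0..}) f t * indicator (Ival M) t))))))"

end

theory Submission
  imports Defs
begin

text \<open>Both implications are transferred along a map \<open>\<Phi>\<close> from functions on \<open>[0,\<infinity>)\<close> to functions
  on \<open>M\<close> with \<open>Xb h = X (\<Phi> h)\<close>, \<open>h \<prec> k \<Longrightarrow> \<Phi> h \<prec> \<Phi> k\<close> and \<open>X (\<Phi> f\<^sup>*) = X f\<close>; the last
  identity is rearrangement invariance, and \<open>f \<prec> g\<close> means exactly \<open>f\<^sup>* \<prec> g\<^sup>*\<close>.
  In the non-atomic case \<open>\<Phi> h = (h\<^sup>* \<chi>\<^bsub>[0,\<mu>(R))\<^esub>) \<circ> \<sigma>\<close> has as rearrangement \<open>h\<^sup>*\<close> truncated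
  at \<open>\<mu>(R)\<close>, and truncation preserves \<open>\<prec>\<close>. In the atomic case \<open>\<Phi> h\<close> places the averages of the
  truncated \<open>h\<^sup>*\<close> over the blocks \<open>[\<beta>n, \<beta>(n+1))\<close> on the atoms; its rearrangement is the
  corresponding step function, whose integral over \<open>[0,t]\<close> interpolates linearly between the
  integrals of the truncated \<open>h\<^sup>*\<close> over \<open>[0,\<beta>j)\<close> and \<open>[0,\<beta>(j+1))\<close>. Since distribution
  functions are then multiples of \<open>\<beta>\<close>, every \<open>f\<^sup>*\<close> is constant on the blocks, which gives
  \<open>X (\<Phi> f\<^sup>*) = X f\<close>.\<close>

subsection \<open>Distribution function and non-increasing rearrangement\<close>

definition distfun :: "'a measure \<Rightarrow> ('a \<Rightarrow> ennreal) \<Rightarrow> ennreal \<Rightarrow> ennreal" where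
  "distfun M f s = emeasure M {x \<in> space M. s < f x}"

definition trunc_rearr :: "'a measure \<Rightarrow> ('a \<Rightarrow> ennreal) \<Rightarrow> ennreal \<Rightarrow> real \<Rightarrow> ennreal" where
  "trunc_rearr M f m t = rearr M f t * indicator {t. ennreal t < m} t"

lemma linorder_eqI_less_iff:
  fixes a b :: "'b::linorder"
  assumes "\<And>s. s < a \<longleftrightarrow> s < b"
  shows "a = b"
  by (metis assms linorder_neqE order_less_irrefl)

lemma less_indicator_iff: "(s::ennreal) < x * indicator J t \<longleftrightarrow> s < x \<and> t \<in> J"
  by (auto simp: indicator_def)

lemma rearr_eq_Inf_distfun: "rearr M f t = Inf {s. distfun M f s \<le> ennreal t}"
  by (simp add: rearr_def distfun_def)

lemma rearr_cong_distfun: "distfun M f = distfun N g \<Longrightarrow> rearr M f = rearr N g"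
  by (simp add: rearr_eq_Inf_distfun fun_eq_iff)

lemma distfun_antimono: "s \<le> s' \<Longrightarrow> f \<in> borel_measurable M \<Longrightarrow> distfun M f s' \<le> distfun M f s"
  unfolding distfun_def by (rule emeasure_mono) auto

lemma distfun_le_space: "f \<in> borel_measurable M \<Longrightarrow> distfun M f s \<le> emeasure M (space M)"
  unfolding distfun_def by (intro emeasure_mono) auto

text \<open>The infimum defining the rearrangement is attained, by continuity of the measure
  along the increasing union of the level sets \<open>{s_n < f}\<close> for \<open>s_n \<down> f\<^sup>*(t)\<close>.\<close>
lemma distfun_rearr_le:
  assumes f: "f \<in> borel_measurable M"
  shows "distfun M f (rearr M f t) \<le> ennreal t"
proof -
  let ?S = "{s. distfun M f s \<le> ennreal t}"
  have "top \<in> ?S" by (simp add: distfun_def)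
  then obtain u where u: "\<And>n. u n \<in> ?S" "u \<longlonglongrightarrow> Inf ?S"
    using Inf_as_limit[of ?S] by auto
  define v where "v n = Min (u ` {..n})" for n
  have vS: "v n \<in> ?S" for n
  proof -
    have "v n \<in> u ` {..n}" unfolding v_def by (intro Min_in) auto
    then show ?thesis using u(1) by auto
  qed
  have v_le: "v n \<le> u n" for n unfolding v_def by (intro Min_le) auto
  have v_dec: "v (Suc n) \<le> v n" for n unfolding v_def by (intro Min_antimono) auto
  have "{x \<in> space M. Inf ?S < f x} \<subseteq> (\<Union>n. {x \<in> space M. v n < f x})"
  proof
    fix x assume x: "x \<in> {x \<in> space M. Inf ?S < f x}"
    then have "eventually (\<lambda>n. u n < f x) sequentially"
      using u(2) by (simp add: order_tendstoD(2))
    then obtain n where "u n < f x" by (meson eventually_sequentially order_refl)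
    with v_le[of n] x show "x \<in> (\<Union>n. {x \<in> space M. v n < f x})" by (auto intro: le_less_trans)
  qed
  hence "distfun M f (Inf ?S) \<le> emeasure M (\<Union>n. {x \<in> space M. v n < f x})"
    unfolding distfun_def by (intro emeasure_mono) (use f in auto)
  also have "\<dots> = (SUP n. emeasure M {x \<in> space M. v n < f x})"
    by (rule SUP_emeasure_incseq[symmetric])
      (use f v_dec in \<open>auto simp: incseq_Suc_iff intro: le_less_trans\<close>)
  also have "\<dots> \<le> ennreal t"
    using vS by (auto simp: distfun_def intro!: SUP_least)
  finally show ?thesis unfolding rearr_eq_Inf_distfun .
qed

lemma less_rearr_iff:
  assumes f: "f \<in> borel_measurable M"
  shows "s < rearr M f t \<longleftrightarrow> ennreal t < distfun M f s"
proof
  assume "s < rearr M f t"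
  then show "ennreal t < distfun M f s"
    unfolding rearr_eq_Inf_distfun by (metis (mono_tags, lifting) Inf_lower mem_Collect_eq not_le leD)
next
  assume "ennreal t < distfun M f s"
  moreover have "rearr M f t \<le> s \<Longrightarrow> distfun M f s \<le> ennreal t"
    using distfun_antimono[OF _ f] distfun_rearr_le[OF f] order_trans by blast
  ultimately show "s < rearr M f t" by (meson leD not_le)
qed

lemma rearr_antimono: "t \<le> t' \<Longrightarrow> rearr M f t' \<le> rearr M f t"
  unfolding rearr_def
  by (intro Inf_superset_mono subsetI) (auto intro: order_trans ennreal_leI)

lemma ennreal_less_set_eq:
  "{t::real. 0 \<le> t \<and> ennreal t < c} = (if c = \<infinity> then {0..} else {0..<enn2real c})"
  by (cases c) (auto simp: ennreal_less_iff)

lemma ennreal_less_set_borel [measurable]: "{t::real. 0 \<le> t \<and> ennreal t < c} \<in> sets borel"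
  by (simp add: ennreal_less_set_eq)

lemma emeasure_lborel_Ici_0: "emeasure lborel {0::real..} = \<infinity>"
proof -
  have "of_nat n \<le> emeasure lborel {0::real..}" for n
  proof -
    have "of_nat n = emeasure lborel {0..<real n}" by (simp add: ennreal_of_nat_eq_real_of_nat)
    also have "\<dots> \<le> emeasure lborel {0::real..}" by (intro emeasure_mono) auto
    finally show ?thesis .
  qed
  then have "(SUP n. of_nat n) \<le> emeasure lborel {0::real..}"
    by (rule SUP_least)
  then show ?thesis by (simp add: ennreal_SUP_of_nat_eq_top top_unique)
qed

lemma emeasure_lborel_ennreal_less: "emeasure lborel {t::real. 0 \<le> t \<and> ennreal t < c} = c"
proof (cases "c = \<infinity>")
  case True
  then have "{t::real. 0 \<le> t \<and> ennreal t < c} = {0..}" by auto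
  then show ?thesis using True emeasure_lborel_Ici_0 by simp
qed (auto simp: ennreal_less_set_eq less_top)

lemma rearr_borel [measurable]:
  assumes f: "f \<in> borel_measurable M"
  shows "rearr M f \<in> borel_measurable borel"
proof (rule borel_measurableI_greater)
  fix y
  have "{x \<in> space borel. y < rearr M f x} = {x. ennreal x < distfun M f y}"
    using less_rearr_iff[OF f] by auto
  then show "{x \<in> space borel. y < rearr M f x} \<in> sets borel" by simp
qed

lemma borel_measurable_lebesgue_onI:
  "g \<in> borel_measurable borel \<Longrightarrow> g \<in> borel_measurable (lebesgue_on S)"
  by (rule measurable_restrict_space1) (rule measurable_completion, simp)

lemma emeasure_lebesgue_on_borel:
  assumes "S \<in> sets borel" "A \<in> sets borel" "A \<subseteq> S"
  shows "emeasure (lebesgue_on S) A = emeasure lborel A"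
  using assms by (subst emeasure_restrict_space) auto

lemma distfun_rearr:
  assumes f: "f \<in> borel_measurable M"
  shows "distfun (lebesgue_on {0..}) (rearr M f) = distfun M f"
proof
  fix s
  have "{t \<in> space (lebesgue_on {0..}). s < rearr M f t} = {t. 0 \<le> t \<and> ennreal t < distfun M f s}"
    using less_rearr_iff[OF f] by auto
  then have "distfun (lebesgue_on {0..}) (rearr M f) s
      = emeasure lborel {t. 0 \<le> t \<and> ennreal t < distfun M f s}"
    unfolding distfun_def by (subst emeasure_lebesgue_on_borel) auto
  then show "distfun (lebesgue_on {0..}) (rearr M f) s = distfun M f s"
    by (simp add: emeasure_lborel_ennreal_less)
qed

lemma rearr_rearr:
  "f \<in> borel_measurable M \<Longrightarrow> rearr (lebesgue_on {0..}) (rearr M f) = rearr M f"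
  by (rule rearr_cong_distfun) (rule distfun_rearr)

lemma hlp_rel_rearr:
  "f \<in> borel_measurable M \<Longrightarrow> g \<in> borel_measurable M \<Longrightarrow> hlp_rel M f g \<Longrightarrow>
    hlp_rel (lebesgue_on {0..}) (rearr M f) (rearr M g)"
  by (simp add: hlp_rel_def rearr_rearr)

lemma trunc_rearr_space:
  assumes f: "f \<in> borel_measurable M"
  shows "trunc_rearr M f (emeasure M (space M)) = rearr M f"
proof
  fix t
  have "rearr M f t = 0" if "\<not> ennreal t < emeasure M (space M)"
  proof (rule ccontr)
    assume "rearr M f t \<noteq> 0"
    then have "ennreal t < distfun M f 0" using less_rearr_iff[OF f, of 0 t] by (simp add: zero_less_iff_neq_zero)
    with that distfun_le_space[OF f, of 0] show False by simp
  qed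
  then show "trunc_rearr M f (emeasure M (space M)) t = rearr M f t"
    unfolding trunc_rearr_def by (cases "ennreal t < emeasure M (space M)") auto
qed

lemma rearr_eq_trunc_rearr:
  assumes F: "F \<in> borel_measurable N" and h: "h \<in> borel_measurable L"
    and d: "\<And>s. distfun N F s = min (distfun L h s) m"
  shows "rearr N F = trunc_rearr L h m"
proof (rule ext, rule linorder_eqI_less_iff)
  fix t s
  show "s < rearr N F t \<longleftrightarrow> s < trunc_rearr L h m t"
    unfolding trunc_rearr_def less_rearr_iff[OF F] less_rearr_iff[OF h] less_indicator_iff d
    by auto
qed

lemma ri_qbfn_distfun_cong:
  assumes "ri_qbfn M X" "f \<in> borel_measurable M" "g \<in> borel_measurable M"
    and "distfun M f = distfun M g"
  shows "X f = X g"
proof -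
  have "\<forall>t\<ge>0. rearr M f t = rearr M g t" using rearr_cong_distfun[OF assms(4)] by simp
  then show ?thesis using assms(1-3) unfolding ri_qbfn_def rearrangement_invariant_def by blast
qed

lemma set_nn_integral_Icc_Ico:
  fixes F :: "real \<Rightarrow> ennreal"
  shows "(\<integral>\<^sup>+ s\<in>{a..b}. F s \<partial>lborel) = (\<integral>\<^sup>+ s\<in>{a..<b}. F s \<partial>lborel)"
  by (rule nn_integral_cong_AE)
     (use AE_lborel_singleton[of b] in \<open>eventually_elim, auto simp: indicator_def\<close>)

lemma trunc_rearr_integral_mono:
  assumes hk: "hlp_rel L h k" and u: "0 \<le> u"
  shows "(\<integral>\<^sup>+ s\<in>{0..<u}. trunc_rearr L h m s \<partial>lborel)
       \<le> (\<integral>\<^sup>+ s\<in>{0..<u}. trunc_rearr L k m s \<partial>lborel)"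
proof -
  obtain v where v: "0 \<le> v" "\<And>t. t \<in> {0..<u} \<and> ennreal t < m \<longleftrightarrow> t \<in> {0..<v}"
  proof (cases "ennreal u \<le> m")
    case True
    have "ennreal t < m" if "0 \<le> t" "t < u" for t
      using that True by (metis ennreal_lessI le_less_trans less_le_trans not_less)
    with u that[of u] show ?thesis by auto
  next
    case False
    then obtain m0 where m0: "m = ennreal m0" "0 \<le> m0"
      by (cases m) auto
    with False have "m0 < u" by (simp add: ennreal_le_iff2 not_le)
    then have "t \<in> {0..<u} \<and> ennreal t < m \<longleftrightarrow> t \<in> {0..<m0}" for t
      using m0 by (auto simp: ennreal_less_iff)
    with m0 that[of m0] show ?thesis by blast
  qed
  have eq: "(\<integral>\<^sup>+ s\<in>{0..<u}. trunc_rearr L g m s \<partial>lborel) = (\<integral>\<^sup>+ s\<in>{0..<v}. rearr L g s \<partial>lborel)" for g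
    unfolding trunc_rearr_def
    by (intro nn_integral_cong) (use v(2) in \<open>auto simp: indicator_def\<close>)
  show ?thesis
  proof (cases "v = 0")
    case False
    with v hk show ?thesis unfolding eq by (simp add: hlp_rel_def set_nn_integral_Icc_Ico)
  qed (simp add: eq)
qed

lemma HLP_principle_transfer:
  fixes M :: "'a measure" and \<Phi> :: "(real \<Rightarrow> ennreal) \<Rightarrow> 'a \<Rightarrow> ennreal"
    and Xb :: "(real \<Rightarrow> ennreal) \<Rightarrow> ennreal"
  assumes meas: "\<And>h. h \<in> borel_measurable (lebesgue_on {0..}) \<Longrightarrow> \<Phi> h \<in> borel_measurable M"
    and Xb: "\<And>h. h \<in> borel_measurable (lebesgue_on {0..}) \<Longrightarrow> Xb h = X (\<Phi> h)"
    and hlp: "\<And>h k. h \<in> borel_measurable (lebesgue_on {0..}) \<Longrightarrow>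
      k \<in> borel_measurable (lebesgue_on {0..}) \<Longrightarrow>
      hlp_rel (lebesgue_on {0..}) h k \<Longrightarrow> hlp_rel M (\<Phi> h) (\<Phi> k)"
    and rearr: "\<And>f. f \<in> borel_measurable M \<Longrightarrow> X (\<Phi> (rearr M f)) = X f"
  shows "HLP_principle M X \<longleftrightarrow> HLP_principle (lebesgue_on {0..}) Xb"
proof
  assume H: "HLP_principle M X"
  show "HLP_principle (lebesgue_on {0..}) Xb"
    unfolding HLP_principle_def
  proof (intro ballI impI)
    fix h k :: "real \<Rightarrow> ennreal"
    assume h: "h \<in> borel_measurable (lebesgue_on {0..})"
      and k: "k \<in> borel_measurable (lebesgue_on {0..})" and "hlp_rel (lebesgue_on {0..}) h k"
    then have "X (\<Phi> h) \<le> X (\<Phi> k)"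
      using H meas hlp unfolding HLP_principle_def by blast
    then show "Xb h \<le> Xb k" using Xb h k by simp
  qed
next
  assume H: "HLP_principle (lebesgue_on {0..}) Xb"
  have f_rearr: "rearr M f \<in> borel_measurable (lebesgue_on {0..})" if "f \<in> borel_measurable M" for f
    using that by (intro borel_measurable_lebesgue_onI rearr_borel)
  show "HLP_principle M X"
    unfolding HLP_principle_def
  proof (intro ballI impI)
    fix f g assume f: "f \<in> borel_measurable M" and g: "g \<in> borel_measurable M"
      and "hlp_rel M f g"
    then have "Xb (rearr M f) \<le> Xb (rearr M g)"
      using H f_rearr hlp_rel_rearr unfolding HLP_principle_def by blast
    then show "X f \<le> X g" using Xb f_rearr rearr f g by simp
  qed
qed

subsection \<open>The non-atomic case\<close>

lemma Ival_borel [measurable]: "Ival M \<in> sets borel"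
  unfolding Ival_def by (rule ennreal_less_set_borel)

lemma Ival_level_set:
  assumes h: "h \<in> borel_measurable N"
  shows "{t \<in> Ival M. s < rearr N h t * indicator (Ival M) t}
    = {t. 0 \<le> t \<and> ennreal t < min (distfun N h s) (emeasure M (space M))}"
  unfolding less_indicator_iff less_rearr_iff[OF h] min_less_iff_conj Ival_def by blast

lemma measurable_rearr_Ival_comp:
  assumes \<sigma>: "\<sigma> \<in> measurable M (restrict_space lborel (Ival M))"
    and h: "h \<in> borel_measurable N"
  shows "(\<lambda>t. rearr N h t * indicator (Ival M) t) \<circ> \<sigma> \<in> borel_measurable M"
proof -
  have "(\<lambda>t. rearr N h t * indicator (Ival M) t) \<in> borel_measurable borel"
    using rearr_borel[OF h] by measurable
  then show ?thesis
    by (intro measurable_comp[OF \<sigma>] measurable_restrict_space1) simp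
qed

lemma distfun_rearr_Ival_comp:
  assumes \<sigma>: "\<sigma> \<in> measurable M (restrict_space lborel (Ival M))"
    and pres: "distr M (restrict_space lborel (Ival M)) \<sigma> = restrict_space lborel (Ival M)"
    and h: "h \<in> borel_measurable N"
  shows "distfun M ((\<lambda>t. rearr N h t * indicator (Ival M) t) \<circ> \<sigma>) s
    = min (distfun N h s) (emeasure M (space M))"
proof -
  let ?\<nu> = "restrict_space lborel (Ival M)"
  let ?A = "{t \<in> Ival M. s < rearr N h t * indicator (Ival M) t}"
  have A_sets: "?A \<in> sets ?\<nu>"
    unfolding Ival_level_set[OF h] by (subst sets_restrict_space_iff) (auto simp: Ival_def)
  have "\<sigma> x \<in> Ival M" if "x \<in> space M" for x
    using measurable_space[OF \<sigma> that] by (simp add: space_restrict_space)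
  then have "{x \<in> space M. s < ((\<lambda>t. rearr N h t * indicator (Ival M) t) \<circ> \<sigma>) x} = \<sigma> -` ?A \<inter> space M"
    by auto
  then have "distfun M ((\<lambda>t. rearr N h t * indicator (Ival M) t) \<circ> \<sigma>) s = emeasure (distr M ?\<nu> \<sigma>) ?A"
    unfolding distfun_def by (simp add: emeasure_distr[OF \<sigma> A_sets])
  also have "\<dots> = emeasure lborel ?A"
    unfolding pres by (subst emeasure_restrict_space) auto
  finally show ?thesis
    unfolding Ival_level_set[OF h] emeasure_lborel_ennreal_less .
qed

lemma HLP_principle_iff_nonatomic:
  fixes M :: "'a measure" and Xb :: "(real \<Rightarrow> ennreal) \<Rightarrow> ennreal"
  assumes ri: "ri_qbfn M X"
    and \<sigma>: "\<sigma> \<in> measurable M (restrict_space lborel (Ival M))"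
    and pres: "distr M (restrict_space lborel (Ival M)) \<sigma> = restrict_space lborel (Ival M)"
    and Xb: "Xb = (\<lambda>f. X ((\<lambda>t. rearr (lebesgue_on {0..}) f t * indicator (Ival M) t) \<circ> \<sigma>))"
  shows "HLP_principle M X \<longleftrightarrow> HLP_principle (lebesgue_on {0..}) Xb"
proof (rule HLP_principle_transfer)
  let ?\<Phi> = "\<lambda>h. (\<lambda>t. rearr (lebesgue_on {0..}) h t * indicator (Ival M) t) \<circ> \<sigma>"
  show meas: "?\<Phi> h \<in> borel_measurable M" if "h \<in> borel_measurable (lebesgue_on {0..})" for h
    using \<sigma> that by (rule measurable_rearr_Ival_comp)
  show "Xb h = X (?\<Phi> h)" for h
    unfolding Xb ..
  show "hlp_rel M (?\<Phi> h) (?\<Phi> k)"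
    if h: "h \<in> borel_measurable (lebesgue_on {0..})"
      and k: "k \<in> borel_measurable (lebesgue_on {0..})"
      and hk: "hlp_rel (lebesgue_on {0..}) h k" for h k :: "real \<Rightarrow> ennreal"
  proof -
    have rearr_\<Phi>: "rearr M (?\<Phi> g) = trunc_rearr (lebesgue_on {0..}) g (emeasure M (space M))"
      if "g \<in> borel_measurable (lebesgue_on {0..})" for g
      by (rule rearr_eq_trunc_rearr[OF meas[OF that] that distfun_rearr_Ival_comp[OF \<sigma> pres that]])
    show ?thesis
      unfolding hlp_rel_def set_nn_integral_Icc_Ico rearr_\<Phi>[OF h] rearr_\<Phi>[OF k]
      using trunc_rearr_integral_mono[OF hk] by (simp add: less_imp_le)
  qed
  show "X (?\<Phi> (rearr M f)) = X f" if f: "f \<in> borel_measurable M" for f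
  proof -
    have f': "rearr M f \<in> borel_measurable (lebesgue_on {0..})"
      by (intro borel_measurable_lebesgue_onI rearr_borel f)
    have "distfun M (?\<Phi> (rearr M f)) = distfun M f"
      using distfun_le_space[OF f]
      by (simp add: fun_eq_iff distfun_rearr_Ival_comp[OF \<sigma> pres f'] distfun_rearr[OF f] min_absorb1)
    then show ?thesis by (rule ri_qbfn_distfun_cong[OF ri meas[OF f'] f])
  qed
qed

subsection \<open>Step functions on blocks of equal length\<close>

lemma atom_emeasure_Int_cases:
  assumes A: "atom M A" and S: "S \<in> sets M"
  shows "emeasure M (A \<inter> S) = 0 \<or> emeasure M (A \<inter> S) = emeasure M A"
proof -
  have As: "A \<in> sets M" using A by (simp add: atom_def)
  have "emeasure M (A \<inter> S) = 0 \<or> emeasure M (A - A \<inter> S) = 0"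
    using A S As unfolding atom_def by (meson Int_lower1 sets.Int)
  moreover have "emeasure M (A \<inter> S) + emeasure M (A - A \<inter> S) = emeasure M A"
    using plus_emeasure[of "A \<inter> S" M "A - A \<inter> S"] As S by (simp add: Un_Diff_Int)
  ultimately show ?thesis by auto
qed

definition quantized :: "real \<Rightarrow> ennreal \<Rightarrow> bool" where
  "quantized \<beta> D \<longleftrightarrow> D = \<infinity> \<or> (\<exists>j::nat. D = ennreal (\<beta> * real j))"

lemma sum_const_ennreal:
  "0 \<le> \<beta> \<Longrightarrow> (\<Sum>n\<in>F. ennreal \<beta>) = ennreal (\<beta> * real (card F))"
  by (simp add: ennreal_mult' mult.commute ennreal_of_nat_eq_real_of_nat)

lemma suminf_if_const_ge:
  assumes "0 \<le> \<beta>" "finite F" "F \<subseteq> {n. P n}"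
  shows "ennreal (\<beta> * real (card F)) \<le> (\<Sum>n. if P n then ennreal \<beta> else 0)"
proof -
  have "ennreal (\<beta> * real (card F)) = (\<Sum>n\<in>F. ennreal \<beta>)"
    using assms(1) by (rule sum_const_ennreal[symmetric])
  also have "\<dots> = (\<Sum>n\<in>F. if P n then ennreal \<beta> else 0)"
    using assms(3) by (intro sum.cong) auto
  also have "\<dots> \<le> (\<Sum>n. if P n then ennreal \<beta> else 0)"
    using assms(2) by (intro sum_le_suminf) auto
  finally show ?thesis .
qed

lemma ennreal_eq_top_if_multiples_le:
  assumes b: "0 < \<beta>" and le: "\<And>j::nat. ennreal (\<beta> * real j) \<le> x"
  shows "x = \<infinity>"
proof (rule ccontr)
  assume "x \<noteq> \<infinity>"
  then obtain r where r: "x = ennreal r" "0 \<le> r" by (cases x) auto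
  obtain j :: nat where "r / \<beta> < real j" using reals_Archimedean2 by blast
  then have "r < \<beta> * real j" using b by (simp add: divide_less_eq mult.commute)
  with le[of j] r show False by (simp add: ennreal_le_iff)
qed

lemma quantized_suminf_if_const:
  assumes b: "0 < \<beta>"
  shows "quantized \<beta> (\<Sum>n. if P n then ennreal \<beta> else 0)"
proof (cases "finite {n. P n}")
  case True
  have "(\<Sum>n. if P n then ennreal \<beta> else 0) = (\<Sum>n\<in>{n. P n}. ennreal \<beta>)"
    using True by (subst suminf_finite[of "{n. P n}"]) auto
  also have "\<dots> = ennreal (\<beta> * real (card {n. P n}))"
    using b by (intro sum_const_ennreal) simp
  finally show ?thesis unfolding quantized_def by blast
next
  case False
  have "ennreal (\<beta> * real j) \<le> (\<Sum>n. if P n then ennreal \<beta> else 0)" for j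
  proof -
    obtain F where "F \<subseteq> {n. P n}" "finite F" "card F = j"
      using infinite_arbitrarily_large[OF False] by blast
    then show ?thesis using suminf_if_const_ge[of \<beta> F P] b by simp
  qed
  then show ?thesis unfolding quantized_def using ennreal_eq_top_if_multiples_le[OF b] by blast
qed

lemma quantized_less_iff:
  assumes b: "0 < \<beta>" and q: "quantized \<beta> D"
    and t: "\<beta> * real n \<le> t" "t < \<beta> * real (Suc n)"
  shows "ennreal t < D \<longleftrightarrow> ennreal (\<beta> * real n) < D"
  using q unfolding quantized_def
proof
  assume "\<exists>j::nat. D = ennreal (\<beta> * real j)"
  then obtain j :: nat where D: "D = ennreal (\<beta> * real j)" by blast
  have "t < \<beta> * real j \<longleftrightarrow> n < j"
  proof
    assume "t < \<beta> * real j"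
    then have "\<beta> * real n < \<beta> * real j" using t(1) by linarith
    then show "n < j" using b by simp
  next
    assume "n < j"
    then have "\<beta> * real (Suc n) \<le> \<beta> * real j" using b by (intro mult_left_mono) auto
    then show "t < \<beta> * real j" using t(2) by linarith
  qed
  moreover have "0 \<le> t" using t(1) b by (simp add: order_trans[OF _ t(1)])
  ultimately show ?thesis unfolding D using b by (simp add: ennreal_less_iff)
qed simp

lemma suminf_less_quantized:
  assumes b: "0 < \<beta>" and q: "quantized \<beta> D"
  shows "(\<Sum>n. if ennreal (\<beta> * real n) < D then ennreal \<beta> else 0) = D"
  using q unfolding quantized_def
proof
  assume D: "D = \<infinity>"
  have "ennreal (\<beta> * real j) \<le> (\<Sum>n. if ennreal (\<beta> * real n) < D then ennreal \<beta> else 0)" for j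
  proof -
    have "{..<j} \<subseteq> {n. ennreal (\<beta> * real n) < D}" using D by auto
    from suminf_if_const_ge[OF _ _ this] b show ?thesis by simp
  qed
  then show ?thesis unfolding D by (rule ennreal_eq_top_if_multiples_le[OF b, unfolded D])
next
  assume "\<exists>j::nat. D = ennreal (\<beta> * real j)"
  then obtain j :: nat where D: "D = ennreal (\<beta> * real j)" by blast
  have iff: "ennreal (\<beta> * real n) < D \<longleftrightarrow> n < j" for n
    unfolding D using b by (simp add: ennreal_less_iff)
  have "(\<Sum>n. if ennreal (\<beta> * real n) < D then ennreal \<beta> else 0) = (\<Sum>n<j. ennreal \<beta>)"
    by (subst suminf_finite[of "{..<j}"]) (auto simp: iff)
  also have "\<dots> = D" unfolding D sum_const_ennreal[OF less_imp_le[OF b]] by simp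
  finally show ?thesis .
qed

lemma nat_floor_divide_bounds:
  assumes b: "0 < \<beta>" and t: "0 \<le> (t::real)"
  shows "\<beta> * real (nat \<lfloor>t / \<beta>\<rfloor>) \<le> t" "t < \<beta> * real (Suc (nat \<lfloor>t / \<beta>\<rfloor>))"
proof -
  have r: "real (nat \<lfloor>t / \<beta>\<rfloor>) = of_int \<lfloor>t / \<beta>\<rfloor>" using b t by simp
  have "of_int \<lfloor>t / \<beta>\<rfloor> \<le> t / \<beta>" by (rule of_int_floor_le)
  then show "\<beta> * real (nat \<lfloor>t / \<beta>\<rfloor>) \<le> t" using b unfolding r by (simp add: le_divide_eq mult.commute)
  have "t / \<beta> < of_int \<lfloor>t / \<beta>\<rfloor> + 1" by (rule real_of_int_floor_add_one_gt)
  then have "t < (of_int \<lfloor>t / \<beta>\<rfloor> + 1) * \<beta>" using b pos_divide_less_eq by blast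
  then show "t < \<beta> * real (Suc (nat \<lfloor>t / \<beta>\<rfloor>))" unfolding of_nat_Suc r
    by (simp add: algebra_simps)
qed

lemma nat_floor_divide_eqI:
  fixes \<beta> s :: real
  assumes b: "0 < \<beta>" and s: "\<beta> * real n \<le> s" "s < \<beta> * real (Suc n)"
  shows "nat \<lfloor>s / \<beta>\<rfloor> = n"
proof -
  have "real n \<le> s / \<beta>" using b s(1) by (simp add: le_divide_eq mult.commute)
  moreover have "s / \<beta> < real n + 1"
    using b s(2) by (simp add: divide_less_eq algebra_simps)
  ultimately have "\<lfloor>s / \<beta>\<rfloor> = int n" by (simp add: floor_eq_iff)
  then show ?thesis by simp
qed

lemma less_suminf_if_const_iff:
  assumes b: "0 < \<beta>" and P: "\<And>n. P (Suc n) \<Longrightarrow> P n" and t: "0 \<le> t"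
  shows "ennreal t < (\<Sum>n. if P n then ennreal \<beta> else 0) \<longleftrightarrow> P (nat \<lfloor>t / \<beta>\<rfloor>)"
proof
  let ?j = "nat \<lfloor>t / \<beta>\<rfloor>"
  note bounds = nat_floor_divide_bounds[OF b t]
  have down: "P n" if "P k" "n \<le> k" for n k
    using that(2,1) by (induction rule: inc_induct) (auto intro: P)
  show "P ?j" if less: "ennreal t < (\<Sum>n. if P n then ennreal \<beta> else 0)"
  proof (rule ccontr)
    assume "\<not> P ?j"
    then have "n < ?j" if "P n" for n
      using down[OF that, of ?j] by (auto simp: not_less[symmetric])
    then have "{n. P n} \<subseteq> {..<?j}" by auto
    then have "(\<Sum>n. if P n then ennreal \<beta> else 0) = (\<Sum>n<?j. if P n then ennreal \<beta> else 0)"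
      by (subst suminf_finite[of "{..<?j}"]) auto
    also have "\<dots> \<le> (\<Sum>n<?j. ennreal \<beta>)" by (rule sum_mono) auto
    also have "\<dots> \<le> ennreal t"
      unfolding sum_const_ennreal[OF less_imp_le[OF b]] using bounds(1) by (simp add: ennreal_leI)
    finally show False using less by simp
  qed
  assume "P ?j"
  then have "(\<Sum>n<Suc ?j. ennreal \<beta>) = (\<Sum>n<Suc ?j. if P n then ennreal \<beta> else 0)"
    using down by (intro sum.cong) auto
  also have "\<dots> \<le> (\<Sum>n. if P n then ennreal \<beta> else 0)" by (rule sum_le_suminf) auto
  finally have "ennreal (\<beta> * real (Suc ?j)) \<le> (\<Sum>n. if P n then ennreal \<beta> else 0)"
    unfolding sum_const_ennreal[OF less_imp_le[OF b]] by simp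
  moreover have "ennreal t < ennreal (\<beta> * real (Suc ?j))"
    using t bounds(2) by (simp add: ennreal_lessI)
  ultimately show "ennreal t < (\<Sum>n. if P n then ennreal \<beta> else 0)" by simp
qed

lemma ennreal_add_mult_mono:
  fixes x1 x2 p1 p2 :: ennreal and l :: real
  assumes l: "0 \<le> l" "l \<le> 1" and x: "x1 \<le> x2" and xp: "x1 + p1 \<le> x2 + p2"
  shows "x1 + ennreal l * p1 \<le> x2 + ennreal l * p2"
proof -
  have one: "ennreal (1 - l) + ennreal l = 1"
    using l by (simp add: ennreal_plus[symmetric] del: ennreal_plus)
  have convex: "x + ennreal l * p = ennreal (1 - l) * x + ennreal l * (x + p)" for x p :: ennreal
  proof -
    have "ennreal (1 - l) * x + ennreal l * (x + p) = (ennreal (1 - l) + ennreal l) * x + ennreal l * p"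
      by (simp only: distrib_left distrib_right add.assoc)
    then show ?thesis by (simp only: one mult_1)
  qed
  have "ennreal (1 - l) * x1 + ennreal l * (x1 + p1) \<le> ennreal (1 - l) * x2 + ennreal l * (x2 + p2)"
    by (rule add_mono[OF mult_left_mono[OF x] mult_left_mono[OF xp]]) simp_all
  then show ?thesis unfolding convex[of x1 p1] convex[of x2 p2] .
qed

lemma set_nn_integral_const_on:
  fixes F :: "real \<Rightarrow> ennreal"
  assumes "A \<in> sets lborel" "\<And>s. s \<in> A \<Longrightarrow> F s = c"
  shows "(\<integral>\<^sup>+ s\<in>A. F s \<partial>lborel) = c * emeasure lborel A"
proof -
  have "(\<integral>\<^sup>+ s\<in>A. F s \<partial>lborel) = (\<integral>\<^sup>+ s. c * indicator A s \<partial>lborel)"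
    using assms(2) by (intro nn_integral_cong) (simp add: indicator_def)
  also have "\<dots> = c * emeasure lborel A"
    using assms(1) by (rule nn_integral_cmult_indicator)
  finally show ?thesis .
qed

lemma set_nn_integral_Ico_blocks:
  fixes F :: "real \<Rightarrow> ennreal"
  assumes b: "0 < \<beta>" and F: "F \<in> borel_measurable borel"
  shows "(\<integral>\<^sup>+ s\<in>{0..<\<beta> * real j}. F s \<partial>lborel)
    = (\<Sum>n<j. \<integral>\<^sup>+ s\<in>{\<beta> * real n..<\<beta> * real (Suc n)}. F s \<partial>lborel)"
proof (induction j)
  case (Suc j)
  have "0 \<le> \<beta> * real j" "\<beta> * real j \<le> \<beta> * real (Suc j)" using b by auto
  then have "indicator {0..<\<beta> * real (Suc j)} s
      = (indicator {0..<\<beta> * real j} s + indicator {\<beta> * real j..<\<beta> * real (Suc j)} s :: ennreal)" for s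
    by (auto simp: indicator_def)
  then have "(\<integral>\<^sup>+ s\<in>{0..<\<beta> * real (Suc j)}. F s \<partial>lborel)
      = (\<integral>\<^sup>+ s. F s * indicator {0..<\<beta> * real j} s
              + F s * indicator {\<beta> * real j..<\<beta> * real (Suc j)} s \<partial>lborel)"
    by (simp add: distrib_left)
  also have "\<dots> = (\<integral>\<^sup>+ s\<in>{0..<\<beta> * real j}. F s \<partial>lborel)
      + (\<integral>\<^sup>+ s\<in>{\<beta> * real j..<\<beta> * real (Suc j)}. F s \<partial>lborel)"
    using F by (intro nn_integral_add) auto
  finally show ?case using Suc by simp
qed simp

lemma set_nn_integral_block_fraction:
  fixes R G :: "real \<Rightarrow> ennreal"
  assumes b: "0 < \<beta>" and x: "\<beta> * real n \<le> x"
    and R: "\<And>s. s \<in> {\<beta> * real n..<x} \<Longrightarrow>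
      R s = ennreal (1 / \<beta>) * (\<integral>\<^sup>+ s\<in>{\<beta> * real n..<\<beta> * real (Suc n)}. G s \<partial>lborel)"
  shows "(\<integral>\<^sup>+ s\<in>{\<beta> * real n..<x}. R s \<partial>lborel)
    = ennreal ((x - \<beta> * real n) / \<beta>) * (\<integral>\<^sup>+ s\<in>{\<beta> * real n..<\<beta> * real (Suc n)}. G s \<partial>lborel)"
proof -
  let ?P = "\<integral>\<^sup>+ s\<in>{\<beta> * real n..<\<beta> * real (Suc n)}. G s \<partial>lborel"
  have "(\<integral>\<^sup>+ s\<in>{\<beta> * real n..<x}. R s \<partial>lborel) = ennreal (1 / \<beta>) * ?P * ennreal (x - \<beta> * real n)"
    using x by (subst set_nn_integral_const_on[OF _ R]) auto
  also have "\<dots> = (ennreal (1 / \<beta>) * ennreal (x - \<beta> * real n)) * ?P"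
    by (simp only: mult_ac)
  also have "ennreal (1 / \<beta>) * ennreal (x - \<beta> * real n) = ennreal ((x - \<beta> * real n) / \<beta>)"
    using b x by (simp flip: ennreal_mult'')
  finally show ?thesis .
qed

lemma set_nn_integral_step_function:
  fixes \<beta> t :: real and R G :: "real \<Rightarrow> ennreal" and a :: "nat \<Rightarrow> ennreal"
  assumes b: "0 < \<beta>" and R_borel: "R \<in> borel_measurable borel" and G_borel: "G \<in> borel_measurable borel"
    and R: "\<And>s. 0 \<le> s \<Longrightarrow> R s = a (nat \<lfloor>s / \<beta>\<rfloor>)"
    and a: "\<And>n. a n = ennreal (1 / \<beta>) * (\<integral>\<^sup>+ s\<in>{\<beta> * real n..\<beta> * real (n + 1)}. G s \<partial>lborel)"
    and t: "\<beta> * real j \<le> t" "t < \<beta> * real (Suc j)"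
  shows "(\<integral>\<^sup>+ s\<in>{0..t}. R s \<partial>lborel) = (\<integral>\<^sup>+ s\<in>{0..<\<beta> * real j}. G s \<partial>lborel)
     + ennreal ((t - \<beta> * real j) / \<beta>) * (\<integral>\<^sup>+ s\<in>{\<beta> * real j..<\<beta> * real (Suc j)}. G s \<partial>lborel)"
proof -
  have R_block: "R s = ennreal (1 / \<beta>) * (\<integral>\<^sup>+ s\<in>{\<beta> * real n..<\<beta> * real (Suc n)}. G s \<partial>lborel)"
    if "s \<in> {\<beta> * real n..<x}" "x \<le> \<beta> * real (Suc n)" for s x n
  proof -
    have "0 \<le> \<beta> * real n" using b by simp
    with that show ?thesis
      using R a nat_floor_divide_eqI[OF b, of n s] by (simp add: set_nn_integral_Icc_Ico)
  qed
  have block: "(\<integral>\<^sup>+ s\<in>{\<beta> * real n..<\<beta> * real (Suc n)}. R s \<partial>lborel)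
      = (\<integral>\<^sup>+ s\<in>{\<beta> * real n..<\<beta> * real (Suc n)}. G s \<partial>lborel)" for n
    using b by (subst set_nn_integral_block_fraction[OF b _ R_block]) (auto simp: algebra_simps)
  have "0 \<le> \<beta> * real j" using b by simp
  then have "indicator {0..<t} s
      = (indicator {0..<\<beta> * real j} s + indicator {\<beta> * real j..<t} s :: ennreal)" for s
    using t by (auto simp: indicator_def)
  then have "(\<integral>\<^sup>+ s\<in>{0..t}. R s \<partial>lborel)
      = (\<integral>\<^sup>+ s. R s * indicator {0..<\<beta> * real j} s + R s * indicator {\<beta> * real j..<t} s \<partial>lborel)"
    by (simp add: set_nn_integral_Icc_Ico distrib_left)
  also have "\<dots> = (\<integral>\<^sup>+ s\<in>{0..<\<beta> * real j}. R s \<partial>lborel) + (\<integral>\<^sup>+ s\<in>{\<beta> * real j..<t}. R s \<partial>lborel)"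
    using R_borel by (intro nn_integral_add) auto
  also have "(\<integral>\<^sup>+ s\<in>{0..<\<beta> * real j}. R s \<partial>lborel) = (\<integral>\<^sup>+ s\<in>{0..<\<beta> * real j}. G s \<partial>lborel)"
    unfolding set_nn_integral_Ico_blocks[OF b R_borel] set_nn_integral_Ico_blocks[OF b G_borel] block ..
  also have "(\<integral>\<^sup>+ s\<in>{\<beta> * real j..<t}. R s \<partial>lborel)
      = ennreal ((t - \<beta> * real j) / \<beta>) * (\<integral>\<^sup>+ s\<in>{\<beta> * real j..<\<beta> * real (Suc j)}. G s \<partial>lborel)"
    using t by (intro set_nn_integral_block_fraction[OF b t(1) R_block]) auto
  finally show ?thesis .
qed

lemma trunc_rearr_borel [measurable]:
  assumes h: "h \<in> borel_measurable N"
  shows "trunc_rearr N h m \<in> borel_measurable borel"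
proof -
  have [measurable]: "rearr N h \<in> borel_measurable borel" by (rule rearr_borel[OF h])
  have [measurable]: "{t::real. ennreal t < m} \<in> sets borel" by measurable
  show ?thesis unfolding trunc_rearr_def by measurable
qed

lemma trunc_rearr_antimono:
  assumes "t \<le> t'"
  shows "trunc_rearr N h m t' \<le> trunc_rearr N h m t"
proof -
  have "indicator {t. ennreal t < m} t' \<le> (indicator {t. ennreal t < m} t :: ennreal)"
    using le_less_trans[OF ennreal_leI[OF assms]] by (auto simp: indicator_def)
  then show ?thesis
    unfolding trunc_rearr_def by (intro mult_mono rearr_antimono assms) auto
qed

lemma rearr_lebesgue_on_Ival:
  assumes h: "h \<in> borel_measurable N"
  shows "rearr (lebesgue_on (Ival M)) (\<lambda>t. rearr N h t * indicator (Ival M) t)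
    = trunc_rearr N h (emeasure M (space M))"
proof (rule rearr_eq_trunc_rearr[OF _ h])
  show "(\<lambda>t. rearr N h t * indicator (Ival M) t) \<in> borel_measurable (lebesgue_on (Ival M))"
  proof (rule borel_measurable_lebesgue_onI)
    show "(\<lambda>t. rearr N h t * indicator (Ival M) t) \<in> borel_measurable borel"
      using rearr_borel[OF h] by measurable
  qed
  fix s
  let ?A = "{t \<in> Ival M. s < rearr N h t * indicator (Ival M) t}"
  have "?A \<in> sets borel" unfolding Ival_level_set[OF h] by simp
  then have "distfun (lebesgue_on (Ival M)) (\<lambda>t. rearr N h t * indicator (Ival M) t) s = emeasure lborel ?A"
    unfolding distfun_def by (subst emeasure_lebesgue_on_borel) auto
  then show "distfun (lebesgue_on (Ival M)) (\<lambda>t. rearr N h t * indicator (Ival M) t) s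
      = min (distfun N h s) (emeasure M (space M))"
    unfolding Ival_level_set[OF h] emeasure_lborel_ennreal_less .
qed

subsection \<open>The completely atomic case\<close>

context
  fixes M :: "'a measure" and \<beta> :: real and e :: "nat \<Rightarrow> 'a set"
  assumes b: "0 < \<beta>" and atom_measure: "\<forall>A. atom M A \<longrightarrow> emeasure M A = ennreal \<beta>"
    and enum: "atom_enum M \<beta> e"
begin

definition atom_step :: "(nat \<Rightarrow> ennreal) \<Rightarrow> 'a \<Rightarrow> ennreal" where
  "atom_step c x = (\<Sum>n. if n \<in> Nset M \<beta> then indicator (e n) x * c n else 0)"

definition block_avg :: "(real \<Rightarrow> ennreal) \<Rightarrow> nat \<Rightarrow> ennreal" where
  "block_avg g n = ennreal (1 / \<beta>) * (\<integral>\<^sup>+ t\<in>{\<beta> * real n..\<beta> * real (n + 1)}. g t \<partial>lborel)"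

lemma Tatom_eq_atom_step: "Tatom M \<beta> e h = atom_step (block_avg (rearr (lebesgue_on (Ival M)) h))"
  unfolding Tatom_def atom_step_def block_avg_def ..

lemma enum_atom: "n \<in> Nset M \<beta> \<Longrightarrow> atom M (e n)"
  using enum by (simp add: atom_enum_def)

lemma enum_sets: "n \<in> Nset M \<beta> \<Longrightarrow> e n \<in> sets M"
  using enum_atom by (simp add: atom_def)

lemma enum_emeasure: "n \<in> Nset M \<beta> \<Longrightarrow> emeasure M (e n) = ennreal \<beta>"
  using enum_atom atom_measure by blast

lemma enum_disjoint: "n \<in> Nset M \<beta> \<Longrightarrow> m \<in> Nset M \<beta> \<Longrightarrow> m \<noteq> n \<Longrightarrow> e m \<inter> e n = {}"
  using enum unfolding atom_enum_def disjoint_family_on_def by blast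

lemma emeasure_eq_suminf_atoms:
  assumes S: "S \<in> sets M"
  shows "emeasure M S = (\<Sum>n. if n \<in> Nset M \<beta> then emeasure M (e n \<inter> S) else 0)"
proof -
  define E where "E n = (if n \<in> Nset M \<beta> then e n \<inter> S else {})" for n
  have E_sets: "E n \<in> sets M" for n unfolding E_def using enum_sets S by auto
  have "disjoint_family E"
    unfolding disjoint_family_on_def E_def using enum_disjoint by auto
  then have "emeasure M (\<Union>n. E n) = (\<Sum>n. emeasure M (E n))"
    using E_sets by (intro suminf_emeasure[symmetric]) auto
  also have "\<dots> = (\<Sum>n. if n \<in> Nset M \<beta> then emeasure M (e n \<inter> S) else 0)"
    unfolding E_def by (intro suminf_cong) simp
  finally have union: "emeasure M (\<Union>n. E n) = \<dots>" .
  have null: "emeasure M (space M - (\<Union>n\<in>Nset M \<beta>. e n)) = 0"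
    using enum by (simp add: atom_enum_def)
  have "(\<Union>n\<in>Nset M \<beta>. e n) \<in> sets M" using enum_sets by (intro sets.countable_UN'') auto
  moreover have "S - (\<Union>n. E n) \<subseteq> space M - (\<Union>n\<in>Nset M \<beta>. e n)"
    using sets.sets_into_space[OF S] unfolding E_def by auto
  ultimately have "emeasure M (S - (\<Union>n. E n)) = 0"
    by (intro emeasure_eq_0[OF _ null]) auto
  moreover have "(\<Union>n. E n) \<subseteq> S" unfolding E_def by auto
  ultimately have "emeasure M ((\<Union>n. E n) \<union> (S - (\<Union>n. E n))) = emeasure M (\<Union>n. E n)"
    using E_sets S by (intro emeasure_Un_null_set null_setsI) auto
  moreover have "(\<Union>n. E n) \<union> (S - (\<Union>n. E n)) = S" using \<open>(\<Union>n. E n) \<subseteq> S\<close> by blast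
  ultimately have "emeasure M S = emeasure M (\<Union>n. E n)" by simp
  then show ?thesis unfolding union .
qed

lemma atom_step_eq:
  assumes n: "n \<in> Nset M \<beta>" and x: "x \<in> e n"
  shows "atom_step c x = c n"
proof -
  have "atom_step c x = (\<Sum>m\<in>{n}. if m \<in> Nset M \<beta> then indicator (e m) x * c m else 0)"
    unfolding atom_step_def
    by (rule suminf_finite) (use enum_disjoint[OF n] x in \<open>auto simp: indicator_def\<close>)
  then show ?thesis using n x by simp
qed

lemma atom_step_measurable: "atom_step c \<in> borel_measurable M"
  unfolding atom_step_def
proof (rule borel_measurable_suminf_order)
  fix n
  show "(\<lambda>x. if n \<in> Nset M \<beta> then indicator (e n) x * c n else 0) \<in> borel_measurable M"
  proof (cases "n \<in> Nset M \<beta>")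
    case True
    then show ?thesis using enum_sets[OF True] by simp
  qed simp
qed

lemma distfun_atom_step:
  "distfun M (atom_step c) s = (\<Sum>n. if n \<in> Nset M \<beta> \<and> s < c n then ennreal \<beta> else 0)"
proof -
  have S: "{x \<in> space M. s < atom_step c x} \<in> sets M"
    using atom_step_measurable by measurable
  have "e n \<inter> {x \<in> space M. s < atom_step c x} = (if s < c n then e n else {})"
    if n: "n \<in> Nset M \<beta>" for n
    using atom_step_eq[OF n] sets.sets_into_space[OF enum_sets[OF n]] by auto
  then show ?thesis
    unfolding distfun_def emeasure_eq_suminf_atoms[OF S]
    by (intro suminf_cong) (simp add: enum_emeasure)
qed

lemma quantized_distfun:
  assumes f: "f \<in> borel_measurable M"
  shows "quantized \<beta> (distfun M f s)"
proof -
  have S: "{x \<in> space M. s < f x} \<in> sets M" using f by measurable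
  let ?P = "\<lambda>n. n \<in> Nset M \<beta> \<and> emeasure M (e n \<inter> {x \<in> space M. s < f x}) \<noteq> 0"
  have "distfun M f s = (\<Sum>n. if ?P n then ennreal \<beta> else 0)"
    unfolding distfun_def emeasure_eq_suminf_atoms[OF S]
    using atom_emeasure_Int_cases[OF enum_atom S] enum_emeasure
    by (intro suminf_cong) auto
  then show ?thesis using quantized_suminf_if_const[OF b] by simp
qed

lemma block_avg_const:
  assumes "\<And>t. t \<in> {\<beta> * real n..<\<beta> * real (Suc n)} \<Longrightarrow> g t = c"
  shows "block_avg g n = c"
proof -
  have "block_avg g n = ennreal (1 / \<beta>) * (c * ennreal \<beta>)"
    unfolding block_avg_def set_nn_integral_Icc_Ico Suc_eq_plus1[symmetric]
    using b by (subst set_nn_integral_const_on[OF _ assms]) (auto simp: algebra_simps)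
  also have "\<dots> = c"
    using b by (simp add: mult.left_commute ennreal_mult''[symmetric] del: ennreal_mult'')
  finally show ?thesis .
qed

lemma block_avg_rearr:
  assumes f: "f \<in> borel_measurable M"
  shows "block_avg (rearr M f) n = rearr M f (\<beta> * real n)"
proof (rule block_avg_const, rule linorder_eqI_less_iff)
  fix t s assume "t \<in> {\<beta> * real n..<\<beta> * real (Suc n)}"
  then show "s < rearr M f t \<longleftrightarrow> s < rearr M f (\<beta> * real n)"
    unfolding less_rearr_iff[OF f] by (intro quantized_less_iff[OF b quantized_distfun[OF f]]) auto
qed

lemma X_atom_step_block_avg_rearr:
  assumes ri: "ri_qbfn M X" and f: "f \<in> borel_measurable M"
  shows "X (atom_step (block_avg (rearr M f))) = X f"
proof (rule ri_qbfn_distfun_cong[OF ri atom_step_measurable f], rule ext)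
  fix s
  have "n \<in> Nset M \<beta> \<and> s < block_avg (rearr M f) n \<longleftrightarrow> ennreal (\<beta> * real n) < distfun M f s" for n
    using distfun_le_space[OF f, of s]
    unfolding block_avg_rearr[OF f] less_rearr_iff[OF f] Nset_def by auto
  then have "distfun M (atom_step (block_avg (rearr M f))) s
      = (\<Sum>n. if ennreal (\<beta> * real n) < distfun M f s then ennreal \<beta> else 0)"
    unfolding distfun_atom_step by simp
  also have "\<dots> = distfun M f s"
    by (rule suminf_less_quantized[OF b quantized_distfun[OF f]])
  finally show "distfun M (atom_step (block_avg (rearr M f))) s = distfun M f s" .
qed

lemma block_avg_antimono:
  assumes anti: "\<And>x y. x \<le> y \<Longrightarrow> g y \<le> g x"
  shows "block_avg g (Suc n) \<le> block_avg g n"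
proof -
  let ?c = "g (\<beta> * real (Suc n))"
  have "(\<integral>\<^sup>+ t\<in>{\<beta> * real (Suc n)..\<beta> * real (Suc n + 1)}. g t \<partial>lborel)
      \<le> (\<integral>\<^sup>+ t\<in>{\<beta> * real (Suc n)..\<beta> * real (Suc n + 1)}. ?c \<partial>lborel)"
    by (intro nn_integral_mono) (auto simp: indicator_def intro: anti)
  also have "\<dots> = ?c * ennreal \<beta>"
    using b by (simp add: nn_integral_cmult_indicator algebra_simps)
  also have "\<dots> = (\<integral>\<^sup>+ t\<in>{\<beta> * real n..\<beta> * real (n + 1)}. ?c \<partial>lborel)"
    using b by (simp add: nn_integral_cmult_indicator algebra_simps)
  also have "\<dots> \<le> (\<integral>\<^sup>+ t\<in>{\<beta> * real n..\<beta> * real (n + 1)}. g t \<partial>lborel)"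
    by (intro nn_integral_mono) (auto simp: indicator_def intro: anti)
  finally show ?thesis
    unfolding block_avg_def by (intro mult_left_mono) simp_all
qed

lemma block_avg_trunc_rearr_eq_0:
  assumes n: "n \<notin> Nset M \<beta>"
  shows "block_avg (trunc_rearr N h (emeasure M (space M))) n = 0"
proof (rule block_avg_const)
  fix t assume "t \<in> {\<beta> * real n..<\<beta> * real (Suc n)}"
  then have "emeasure M (space M) \<le> ennreal t"
    using n order_trans[OF _ ennreal_leI] unfolding Nset_def by (auto simp: not_less)
  then show "trunc_rearr N h (emeasure M (space M)) t = 0"
    unfolding trunc_rearr_def by (simp add: not_less[symmetric])
qed

lemma rearr_atom_step:
  assumes anti: "\<And>n. c (Suc n) \<le> c n" and zero: "\<And>n. n \<notin> Nset M \<beta> \<Longrightarrow> c n = 0"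
    and t: "0 \<le> t"
  shows "rearr M (atom_step c) t = c (nat \<lfloor>t / \<beta>\<rfloor>)"
proof (rule linorder_eqI_less_iff)
  fix s
  have "distfun M (atom_step c) s = (\<Sum>n. if s < c n then ennreal \<beta> else 0)"
    unfolding distfun_atom_step using zero by (intro suminf_cong) auto
  moreover have "s < c n" if "s < c (Suc n)" for n
    using that anti[of n] by (rule less_le_trans)
  ultimately show "s < rearr M (atom_step c) t \<longleftrightarrow> s < c (nat \<lfloor>t / \<beta>\<rfloor>)"
    unfolding less_rearr_iff[OF atom_step_measurable] using less_suminf_if_const_iff[OF b _ t]
    by simp
qed

lemma rearr_atom_step_trunc_rearr:
  assumes "0 \<le> t"
  shows "rearr M (atom_step (block_avg (trunc_rearr N h (emeasure M (space M))))) t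
    = block_avg (trunc_rearr N h (emeasure M (space M))) (nat \<lfloor>t / \<beta>\<rfloor>)"
  by (intro rearr_atom_step block_avg_antimono trunc_rearr_antimono
      block_avg_trunc_rearr_eq_0 assms)

lemma hlp_rel_atom_step:
  assumes h: "h \<in> borel_measurable N" and k: "k \<in> borel_measurable N" and hk: "hlp_rel N h k"
  defines "m \<equiv> emeasure M (space M)"
  shows "hlp_rel M (atom_step (block_avg (trunc_rearr N h m))) (atom_step (block_avg (trunc_rearr N k m)))"
  unfolding hlp_rel_def
proof (intro allI impI)
  fix t :: real assume "0 < t"
  then have t: "0 \<le> t" by simp
  define j where "j = nat \<lfloor>t / \<beta>\<rfloor>"
  define l where "l = (t - \<beta> * real j) / \<beta>"
  have bounds: "\<beta> * real j \<le> t" "t < \<beta> * real (Suc j)"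
    using nat_floor_divide_bounds[OF b t] unfolding j_def by auto
  have l: "0 \<le> l" "l \<le> 1" unfolding l_def using b bounds by (auto simp: field_simps)
  let ?I = "\<lambda>g a c. \<integral>\<^sup>+ s\<in>{a..<c}. g s \<partial>lborel"
  have step: "(\<integral>\<^sup>+ s\<in>{0..t}. rearr M (atom_step (block_avg (trunc_rearr N g m))) s \<partial>lborel)
      = ?I (trunc_rearr N g m) 0 (\<beta> * real j) + ennreal l * ?I (trunc_rearr N g m) (\<beta> * real j) (\<beta> * real (Suc j))"
    if g: "g \<in> borel_measurable N" for g
    unfolding l_def
    by (rule set_nn_integral_step_function[OF b rearr_borel[OF atom_step_measurable]
          trunc_rearr_borel[OF g] _ _ bounds])
       (simp_all add: m_def rearr_atom_step_trunc_rearr block_avg_def)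
  have split: "?I (trunc_rearr N g m) 0 (\<beta> * real (Suc j))
      = ?I (trunc_rearr N g m) 0 (\<beta> * real j) + ?I (trunc_rearr N g m) (\<beta> * real j) (\<beta> * real (Suc j))"
    if g: "g \<in> borel_measurable N" for g
    unfolding set_nn_integral_Ico_blocks[OF b trunc_rearr_borel[OF g]] by simp
  have "?I (trunc_rearr N h m) 0 (\<beta> * real j) \<le> ?I (trunc_rearr N k m) 0 (\<beta> * real j)"
    using b by (intro trunc_rearr_integral_mono[OF hk]) simp
  moreover have "?I (trunc_rearr N h m) 0 (\<beta> * real (Suc j)) \<le> ?I (trunc_rearr N k m) 0 (\<beta> * real (Suc j))"
    using b by (intro trunc_rearr_integral_mono[OF hk]) simp
  ultimately show "(\<integral>\<^sup>+ s\<in>{0..t}. rearr M (atom_step (block_avg (trunc_rearr N h m))) s \<partial>lborel)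
      \<le> (\<integral>\<^sup>+ s\<in>{0..t}. rearr M (atom_step (block_avg (trunc_rearr N k m))) s \<partial>lborel)"
    unfolding step[OF h] step[OF k] split[OF h] split[OF k] by (rule ennreal_add_mult_mono[OF l])
qed

lemma HLP_principle_iff_atomic:
  fixes Xb :: "(real \<Rightarrow> ennreal) \<Rightarrow> ennreal"
  assumes ri: "ri_qbfn M X"
    and Xb: "Xb = (\<lambda>f. X (Tatom M \<beta> e (\<lambda>t. rearr (lebesgue_on {0..}) f t * indicator (Ival M) t)))"
  shows "HLP_principle M X \<longleftrightarrow> HLP_principle (lebesgue_on {0..}) Xb"
proof (rule HLP_principle_transfer)
  let ?m = "emeasure M (space M)"
  let ?\<Phi> = "\<lambda>h. atom_step (block_avg (trunc_rearr (lebesgue_on {0..}) h ?m))"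
  show "?\<Phi> h \<in> borel_measurable M" for h
    by (rule atom_step_measurable)
  show "Xb h = X (?\<Phi> h)" if "h \<in> borel_measurable (lebesgue_on {0..})" for h
    unfolding Xb Tatom_eq_atom_step rearr_lebesgue_on_Ival[OF that] ..
  show "hlp_rel M (?\<Phi> h) (?\<Phi> k)"
    if "h \<in> borel_measurable (lebesgue_on {0..})" "k \<in> borel_measurable (lebesgue_on {0..})"
      and "hlp_rel (lebesgue_on {0..}) h k" for h k :: "real \<Rightarrow> ennreal"
    using hlp_rel_atom_step[OF that] .
  show "X (?\<Phi> (rearr M f)) = X f" if f: "f \<in> borel_measurable M" for f
  proof -
    have "trunc_rearr (lebesgue_on {0..}) (rearr M f) ?m = trunc_rearr M f ?m"
      unfolding trunc_rearr_def rearr_rearr[OF f] ..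
    then show ?thesis using X_atom_step_block_avg_rearr[OF ri f] trunc_rearr_space[OF f] by simp
  qed
qed

end

theorem mainTheorem4:
  fixes M :: "'a measure"
    and X :: "('a \<Rightarrow> ennreal) \<Rightarrow> ennreal"
    and Xb :: "(real \<Rightarrow> ennreal) \<Rightarrow> ennreal"
  assumes "sigma_finite_measure M"
    and "resonant M"
    and "ri_qbfn M X"
    and "is_Xbar M X Xb"
  shows "HLP_principle M X \<longleftrightarrow> HLP_principle (lebesgue_on {0..}) Xb"
  using assms(4) unfolding is_Xbar_def
proof (elim disjE conjE exE)
  fix \<sigma>
  assume "\<sigma> \<in> M \<rightarrow>\<^sub>M restrict_space lborel (Ival M)"
    "distr M (restrict_space lborel (Ival M)) \<sigma> = restrict_space lborel (Ival M)"
    "Xb = (\<lambda>f. X ((\<lambda>t. rearr (lebesgue_on {0..}) f t * indicator (Ival M) t) \<circ> \<sigma>))"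
  then show ?thesis by (rule HLP_principle_iff_nonatomic[OF assms(3)])
next
  fix \<beta> e
  assume "0 < \<beta>" "\<forall>A. atom M A \<longrightarrow> emeasure M A = ennreal \<beta>" "atom_enum M \<beta> e"
    "Xb = (\<lambda>f. X (Tatom M \<beta> e (\<lambda>t. rearr (lebesgue_on {0..}) f t * indicator (Ival M) t)))"
  then show ?thesis by (intro HLP_principle_iff_atomic[OF _ _ _ assms(3)])
qed

end
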